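(* Let $G$ be an outerplanar graph with a plane embedding in which the boundary of the outer face is a Hamiltonian cycle $C$ of $G$ (e.g. $G$ maximal outerplanar on at least 3 vertices), and let $\mathcal H,\mathcal K$ be non-piercing families of subgraphs of $G$. Then the cycle intersection system $(C,\{V(H)\}_{H\in\mathcal H},\{V(K)\}_{K\in\mathcal K})$ satisfies the strong $axax$-free property.
   Context: A subgraph $H$ of $G$ is identified with its vertex set $V(H)$ (subgraphs are induced). A family $\mathcal H$ of subgraphs of $G$ is non-piercing if every $H\in\mathcal H$ induces a connected subgraph of $G$ and, for all $H,H'\in\mathcal H$, $G[V(H)\setminus V(H')]$ is connected (an empty vertex set is regarded as connected). Let $C$ be a cycle with a fixed cyclic orientation; "vertices $p_1,p_2,p_3,p_4$ in cyclic order" means they are four distinct vertices met in this order when traversing $C$. For families $\mathcal H,\mathcal K$ of vertex subsets of $C$: a pair $H,H'\in\mathcal H$ is an $axax$-pair if there are vertices $a_1,x_1,a_2,x_2$ in cyclic order with $a_1,a_2\in H\setminus H'$ and $x_1,x_2\in H'$; $(C,\mathcal H)$ is $axax$-free if it has no $axax$-pair; $(C,\mathcal H,\mathcal K)$ satisfies the intersection property if for all $H\in\mathcal H$, $K\in\mathcal K$ having vertices $h_1,k_1,h_2,k_2$ in cyclic order with $h_1,h_2\in H$, $k_1,k_2\in K$, we have $H\cap K\ne\emptyset$; and $(C,\mathcal H,\mathcal K)$ is strong $axax$-free if $(C,\mathcal H)$ and $(C,\mathcal K)$ are both $axax$-free and the intersection property holds. *)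

theory Defs
  imports Main
begin

definition simple_graph :: "'a set \<Rightarrow> ('a \<Rightarrow> 'a \<Rightarrow> bool) \<Rightarrow> bool" where
  "simple_graph V E \<longleftrightarrow> finite V \<and> (\<forall>u v. E u v \<longrightarrow> u \<in> V \<and> v \<in> V \<and> u \<noteq> v \<and> E v u)"

text \<open>The induced subgraph G[S] is connected (the empty set counts as connected).\<close>
definition induced_connected :: "('a \<Rightarrow> 'a \<Rightarrow> bool) \<Rightarrow> 'a set \<Rightarrow> bool" where
  "induced_connected E S \<longleftrightarrow>
     (\<forall>x\<in>S. \<forall>y\<in>S. (\<lambda>u v. E u v \<and> u \<in> S \<and> v \<in> S)\<^sup>*\<^sup>* x y)"

definition ham_cycle :: "'a set \<Rightarrow> ('a \<Rightarrow> 'a \<Rightarrow> bool) \<Rightarrow> 'a list \<Rightarrow> bool" where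
  "ham_cycle V E cyc \<longleftrightarrow> distinct cyc \<and> set cyc = V \<and> length cyc \<ge> 3 \<and>
     (\<forall>i < length cyc. E (cyc ! i) (cyc ! ((i + 1) mod length cyc)))"

definition cyc_order :: "'a list \<Rightarrow> 'a \<Rightarrow> 'a \<Rightarrow> 'a \<Rightarrow> 'a \<Rightarrow> bool" where
  "cyc_order cyc p1 p2 p3 p4 \<longleftrightarrow>
     (\<exists>i1 i2 i3 i4. i1 < length cyc \<and> i2 < length cyc \<and> i3 < length cyc \<and> i4 < length cyc \<and>
        cyc ! i1 = p1 \<and> cyc ! i2 = p2 \<and> cyc ! i3 = p3 \<and> cyc ! i4 = p4 \<and>
        ((i1 < i2 \<and> i2 < i3 \<and> i3 < i4) \<or> (i2 < i3 \<and> i3 < i4 \<and> i4 < i1) \<or>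
         (i3 < i4 \<and> i4 < i1 \<and> i1 < i2) \<or> (i4 < i1 \<and> i1 < i2 \<and> i2 < i3)))"

text \<open>Outerplanar with a plane embedding whose outer face boundary is the Hamiltonian cycle cyc:
  combinatorially, cyc is a Hamiltonian cycle and no two edges (chords) cross with respect to cyc.\<close>
definition outerplanar_ham :: "'a set \<Rightarrow> ('a \<Rightarrow> 'a \<Rightarrow> bool) \<Rightarrow> 'a list \<Rightarrow> bool" where
  "outerplanar_ham V E cyc \<longleftrightarrow> simple_graph V E \<and> ham_cycle V E cyc \<and>
     \<not> (\<exists>a b c d. cyc_order cyc a b c d \<and> E a c \<and> E b d)"

definition non_piercing :: "'a set \<Rightarrow> ('a \<Rightarrow> 'a \<Rightarrow> bool) \<Rightarrow> 'a set set \<Rightarrow> bool" where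
  "non_piercing V E \<H> \<longleftrightarrow>
     (\<forall>H\<in>\<H>. H \<subseteq> V \<and> induced_connected E H) \<and>
     (\<forall>H\<in>\<H>. \<forall>H'\<in>\<H>. induced_connected E (H - H'))"

definition axax_pair :: "'a list \<Rightarrow> 'a set \<Rightarrow> 'a set \<Rightarrow> bool" where
  "axax_pair cyc H H' \<longleftrightarrow>
     (\<exists>a1 x1 a2 x2. cyc_order cyc a1 x1 a2 x2 \<and> a1 \<in> H - H' \<and> a2 \<in> H - H' \<and> x1 \<in> H' \<and> x2 \<in> H')"

definition axax_free :: "'a list \<Rightarrow> 'a set set \<Rightarrow> bool" where
  "axax_free cyc \<H> \<longleftrightarrow> (\<forall>H\<in>\<H>. \<forall>H'\<in>\<H>. \<not> axax_pair cyc H H')"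

definition intersection_property :: "'a list \<Rightarrow> 'a set set \<Rightarrow> 'a set set \<Rightarrow> bool" where
  "intersection_property cyc \<H> \<K> \<longleftrightarrow>
     (\<forall>H\<in>\<H>. \<forall>K\<in>\<K>.
        (\<exists>h1 k1 h2 k2. cyc_order cyc h1 k1 h2 k2 \<and> h1 \<in> H \<and> h2 \<in> H \<and> k1 \<in> K \<and> k2 \<in> K)
        \<longrightarrow> H \<inter> K \<noteq> {})"

definition strong_axax_free :: "'a list \<Rightarrow> 'a set set \<Rightarrow> 'a set set \<Rightarrow> bool" where
  "strong_axax_free cyc \<H> \<K> \<longleftrightarrow>
     axax_free cyc \<H> \<and> axax_free cyc \<K> \<and> intersection_property cyc \<H> \<K>"

end

theory Submission
  imports Defs
begin

text \<open>An edge \<open>uv\<close> splits the rest of the outer cycle into two arcs, and since no two edges cross,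
  a connected vertex set avoiding \<open>u\<close> and \<open>v\<close> stays on one arc. Suppose disjoint connected sets
  \<open>S\<close> and \<open>T\<close> interleave as \<open>a\<^sub>1 x\<^sub>1 a\<^sub>2 x\<^sub>2\<close>. Applied to \<open>T\<close> and each edge \<open>yz\<close> of \<open>S\<close>, this shows that
  \<open>x\<^sub>1, x\<^sub>2\<close> do not separate \<open>y, z\<close> (separation of pairs is symmetric); so \<open>S\<close> stays on one side of
  \<open>x\<^sub>1, x\<^sub>2\<close>, contradicting the position of \<open>a\<^sub>1\<close> and \<open>a\<^sub>2\<close>. Taking \<open>S = H - H'\<close>,
  \<open>T = H'\<close> excludes \<open>axax\<close>-pairs; taking disjoint \<open>S = H\<close>, \<open>T = K\<close> gives the intersection property.\<close>

definition position :: "'a list \<Rightarrow> 'a \<Rightarrow> nat" where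
  "position xs x = (THE i. i < length xs \<and> xs ! i = x)"

lemma position_less_length_nth:
  "distinct xs \<Longrightarrow> x \<in> set xs \<Longrightarrow> position xs x < length xs \<and> xs ! position xs x = x"
  unfolding position_def by (rule theI'[OF distinct_Ex1])

lemma position_nth: "distinct xs \<Longrightarrow> i < length xs \<Longrightarrow> position xs (xs ! i) = i"
  unfolding position_def by (rule the_equality) (auto simp: nth_eq_iff_index_eq)

lemma position_eq_iff:
  "distinct xs \<Longrightarrow> x \<in> set xs \<Longrightarrow> y \<in> set xs \<Longrightarrow> position xs x = position xs y \<longleftrightarrow> x = y"
  by (metis position_less_length_nth)

definition cyclically_ordered :: "nat \<Rightarrow> nat \<Rightarrow> nat \<Rightarrow> nat \<Rightarrow> bool" where
  "cyclically_ordered i1 i2 i3 i4 \<longleftrightarrow>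
     (i1 < i2 \<and> i2 < i3 \<and> i3 < i4) \<or> (i2 < i3 \<and> i3 < i4 \<and> i4 < i1) \<or>
     (i3 < i4 \<and> i4 < i1 \<and> i1 < i2) \<or> (i4 < i1 \<and> i1 < i2 \<and> i2 < i3)"

lemma cyc_order_iff_positions:
  assumes "distinct cyc"
  shows "cyc_order cyc a b c d \<longleftrightarrow> {a, b, c, d} \<subseteq> set cyc \<and>
    cyclically_ordered (position cyc a) (position cyc b) (position cyc c) (position cyc d)"
proof
  assume "cyc_order cyc a b c d"
  then obtain i1 i2 i3 i4 where
    idx: "i1 < length cyc" "i2 < length cyc" "i3 < length cyc" "i4 < length cyc"
    and nth: "cyc ! i1 = a" "cyc ! i2 = b" "cyc ! i3 = c" "cyc ! i4 = d"
    and "cyclically_ordered i1 i2 i3 i4"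
    unfolding cyc_order_def cyclically_ordered_def by blast
  moreover have "position cyc a = i1" "position cyc b = i2" "position cyc c = i3"
    "position cyc d = i4"
    using position_nth[OF assms] idx nth by blast+
  ultimately show "{a, b, c, d} \<subseteq> set cyc \<and>
    cyclically_ordered (position cyc a) (position cyc b) (position cyc c) (position cyc d)"
    by (metis empty_subsetI insert_subset nth_mem)
next
  assume "{a, b, c, d} \<subseteq> set cyc \<and>
    cyclically_ordered (position cyc a) (position cyc b) (position cyc c) (position cyc d)"
  with position_less_length_nth[OF assms] show "cyc_order cyc a b c d"
    unfolding cyc_order_def cyclically_ordered_def
    by (intro exI[of _ "position cyc a"] exI[of _ "position cyc b"] exI[of _ "position cyc c"]
        exI[of _ "position cyc d"]) simp
qed

definition strictly_between :: "nat \<Rightarrow> nat \<Rightarrow> nat \<Rightarrow> bool" where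
  "strictly_between i j k \<longleftrightarrow> i < k \<and> k < j \<or> j < k \<and> k < i"

lemma strictly_between_ne_iff_cyclically_ordered:
  assumes "k \<noteq> i" "k \<noteq> j" "l \<noteq> i" "l \<noteq> j"
  shows "strictly_between i j k \<noteq> strictly_between i j l \<longleftrightarrow>
    cyclically_ordered i k j l \<or> cyclically_ordered i l j k"
  using assms unfolding strictly_between_def cyclically_ordered_def by presburger

lemma strictly_between_ne_swap:
  assumes "k \<noteq> i" "k \<noteq> j" "l \<noteq> i" "l \<noteq> j"
  shows "strictly_between i j k \<noteq> strictly_between i j l \<longleftrightarrow>
    strictly_between k l i \<noteq> strictly_between k l j"
  using assms unfolding strictly_between_def by presburger

text \<open>\<open>w\<close> lies on the open arc from \<open>u\<close> to \<open>v\<close> not containing \<open>cyc ! 0\<close>; all that matters below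
  is that the two open arcs are the two sides of \<open>u\<close> and \<open>v\<close>.\<close>
definition between :: "'a list \<Rightarrow> 'a \<Rightarrow> 'a \<Rightarrow> 'a \<Rightarrow> bool" where
  "between cyc u v w \<longleftrightarrow> strictly_between (position cyc u) (position cyc v) (position cyc w)"

lemma between_ne_iff_cyc_order:
  assumes "distinct cyc" "{a, b, c, d} \<subseteq> set cyc" "b \<notin> {a, c}" "d \<notin> {a, c}"
  shows "between cyc a c b \<noteq> between cyc a c d \<longleftrightarrow> cyc_order cyc a b c d \<or> cyc_order cyc a d c b"
proof -
  have "position cyc b \<noteq> position cyc a" "position cyc b \<noteq> position cyc c"
    "position cyc d \<noteq> position cyc a" "position cyc d \<noteq> position cyc c"
    using assms(2-4) position_eq_iff[OF assms(1)] by auto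
  note positions = strictly_between_ne_iff_cyclically_ordered[OF this]
  have "{a, d, c, b} = {a, b, c, d}"
    by auto
  with positions assms(2) show ?thesis
    unfolding between_def cyc_order_iff_positions[OF assms(1)] by auto
qed

lemma between_ne_swap:
  assumes "distinct cyc" "{u, v, s, t} \<subseteq> set cyc" "s \<notin> {u, v}" "t \<notin> {u, v}"
  shows "between cyc u v s \<noteq> between cyc u v t \<longleftrightarrow> between cyc s t u \<noteq> between cyc s t v"
proof -
  have "position cyc s \<noteq> position cyc u" "position cyc s \<noteq> position cyc v"
    "position cyc t \<noteq> position cyc u" "position cyc t \<noteq> position cyc v"
    using assms(2-4) position_eq_iff[OF assms(1)] by auto
  then show ?thesis
    unfolding between_def by (rule strictly_between_ne_swap)
qed

lemma induced_connected_constant: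
  assumes "induced_connected E S" "x \<in> S" "y \<in> S"
    and "\<And>u v. E u v \<Longrightarrow> u \<in> S \<Longrightarrow> v \<in> S \<Longrightarrow> f u = f v"
  shows "f x = f y"
proof -
  have "(\<lambda>u v. E u v \<and> u \<in> S \<and> v \<in> S)\<^sup>*\<^sup>* x y"
    using assms(1-3) unfolding induced_connected_def by blast
  then show ?thesis
    by induction (auto dest: assms(4))
qed

lemma outerplanar_chord_same_side:
  assumes G: "outerplanar_ham V E cyc" and "E u v" "E s t" "s \<notin> {u, v}" "t \<notin> {u, v}"
  shows "between cyc u v s \<longleftrightarrow> between cyc u v t"
proof (rule ccontr)
  have E: "simple_graph V E" and cyc: "distinct cyc" "set cyc = V"
    and no_crossing: "\<And>a b c d. cyc_order cyc a b c d \<Longrightarrow> E a c \<Longrightarrow> E b d \<Longrightarrow> False"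
    using G unfolding outerplanar_ham_def ham_cycle_def by blast+
  have "{u, v, s, t} \<subseteq> set cyc" and "E t s"
    using E \<open>E u v\<close> \<open>E s t\<close> cyc(2) unfolding simple_graph_def by auto
  moreover assume "between cyc u v s \<noteq> between cyc u v t"
  ultimately have "cyc_order cyc u s v t \<or> cyc_order cyc u t v s"
    using between_ne_iff_cyc_order[OF cyc(1)] assms(4,5) by blast
  then show False
    using no_crossing \<open>E u v\<close> \<open>E s t\<close> \<open>E t s\<close> by blast
qed

lemma outerplanar_connected_not_interleaved:
  assumes G: "outerplanar_ham V E cyc"
    and "S \<subseteq> V" "T \<subseteq> V" "S \<inter> T = {}"
    and S: "induced_connected E S" and T: "induced_connected E T"
    and "a1 \<in> S" "a2 \<in> S" "x1 \<in> T" "x2 \<in> T"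
  shows "\<not> cyc_order cyc a1 x1 a2 x2"
proof
  have cyc: "distinct cyc" "set cyc = V"
    using G unfolding outerplanar_ham_def ham_cycle_def by blast+
  have x_not_S: "x1 \<notin> S" "x2 \<notin> S"
    using assms(4,9,10) by blast+
  have T_one_side: "between cyc y z x1 \<longleftrightarrow> between cyc y z x2"
    if "E y z" "y \<in> S" "z \<in> S" for y z
  proof (rule induced_connected_constant[OF T \<open>x1 \<in> T\<close> \<open>x2 \<in> T\<close>])
    fix p q assume "E p q" "p \<in> T" "q \<in> T"
    with that assms(4) show "between cyc y z p \<longleftrightarrow> between cyc y z q"
      by (intro outerplanar_chord_same_side[OF G \<open>E y z\<close> \<open>E p q\<close>]) blast+
  qed
  have "between cyc x1 x2 a1 \<longleftrightarrow> between cyc x1 x2 a2"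
  proof (rule induced_connected_constant[OF S \<open>a1 \<in> S\<close> \<open>a2 \<in> S\<close>])
    fix y z assume yz: "E y z" "y \<in> S" "z \<in> S"
    then have "{y, z, x1, x2} \<subseteq> set cyc" "x1 \<notin> {y, z}" "x2 \<notin> {y, z}"
      using assms(2,3,9,10) cyc(2) x_not_S by auto
    from between_ne_swap[OF cyc(1) this] T_one_side[OF yz]
    show "between cyc x1 x2 y \<longleftrightarrow> between cyc x1 x2 z"
      by blast
  qed
  moreover assume "cyc_order cyc a1 x1 a2 x2"
  moreover have "{a1, x1, a2, x2} \<subseteq> set cyc" "x1 \<notin> {a1, a2}" "x2 \<notin> {a1, a2}"
    using assms(2,3,7-10) cyc(2) x_not_S by auto
  ultimately show False
    using between_ne_iff_cyc_order[OF cyc(1), of a1 x1 a2 x2]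
      between_ne_swap[OF cyc(1), of a1 a2 x1 x2] by auto
qed

lemma non_piercing_axax_free:
  assumes G: "outerplanar_ham V E cyc" and "non_piercing V E \<H>"
  shows "axax_free cyc \<H>"
  unfolding axax_free_def axax_pair_def
proof (intro ballI notI, elim exE conjE)
  fix H H' a1 x1 a2 x2
  assume "H \<in> \<H>" "H' \<in> \<H>" "cyc_order cyc a1 x1 a2 x2"
    and "a1 \<in> H - H'" "a2 \<in> H - H'" "x1 \<in> H'" "x2 \<in> H'"
  with assms(2) show False
    unfolding non_piercing_def
    using outerplanar_connected_not_interleaved[OF G, of "H - H'" H' a1 a2 x1 x2] by blast
qed

lemma non_piercing_intersection_property:
  assumes G: "outerplanar_ham V E cyc" and "non_piercing V E \<H>" "non_piercing V E \<K>"
  shows "intersection_property cyc \<H> \<K>"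
  unfolding intersection_property_def
proof (intro ballI impI notI, elim exE conjE)
  fix H K h1 k1 h2 k2
  assume "H \<in> \<H>" "K \<in> \<K>" "H \<inter> K = {}" "cyc_order cyc h1 k1 h2 k2"
    and "h1 \<in> H" "h2 \<in> H" "k1 \<in> K" "k2 \<in> K"
  with assms(2,3) show False
    unfolding non_piercing_def
    using outerplanar_connected_not_interleaved[OF G, of H K h1 h2 k1 k2] by blast
qed

theorem mainTheorem13:
  fixes V :: "'a set" and E :: "'a \<Rightarrow> 'a \<Rightarrow> bool" and cyc :: "'a list"
    and \<H> \<K> :: "'a set set"
  assumes "outerplanar_ham V E cyc"
    and "non_piercing V E \<H>"
    and "non_piercing V E \<K>"
  shows "strong_axax_free cyc \<H> \<K>"
  unfolding strong_axax_free_def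
  using non_piercing_axax_free[OF assms(1,2)] non_piercing_axax_free[OF assms(1,3)]
    non_piercing_intersection_property[OF assms] by blast

end
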